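(* Let $q$ be an indeterminate, $k\ge1$, $n\ge2$, and work in $H_{kn}(q)$ over $\mathbb{C}(q)$. For $i\in\{1,\dots,n-1\}$ let $w_i\in\mathfrak S_{kn}$ be the involution exchanging the blocks $\{(i-1)k+1,\dots,ik\}$ and $\{ik+1,\dots,(i+1)k\}$ preserving order ($w_i(j)=j+k$ for $(i-1)k<j\le ik$, $w_i(j)=j-k$ for $ik<j\le(i+1)k$, $w_i(j)=j$ otherwise), and let $\Sigma_i=P_{k,n}\sigma_{w_i}P_{k,n}\in H^{fus}_{k,n}(q)=P_{k,n}H_{kn}(q)P_{k,n}$. Then $\sigma_{w_i}$ commutes with $P_{k,n}$, and in $H^{fus}_{k,n}(q)$ one has $\Sigma_i\Sigma_{i+1}\Sigma_i=\Sigma_{i+1}\Sigma_i\Sigma_{i+1}$ for $1\le i\le n-2$ and $\Sigma_i\Sigma_j=\Sigma_j\Sigma_i$ for $|i-j|>1$.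
   Context: $H_m(q)$ is the algebra generated by $\sigma_1,\dots,\sigma_{m-1}$ with relations $\sigma_i\sigma_{i+1}\sigma_i=\sigma_{i+1}\sigma_i\sigma_{i+1}$, $\sigma_i\sigma_j=\sigma_j\sigma_i$ for $|i-j|>1$, $\sigma_i^2=1+(q-q^{-1})\sigma_i$. For $w\in\mathfrak S_m$ with reduced expression $s_{a_1}\cdots s_{a_r}$, $\sigma_w=\sigma_{a_1}\cdots\sigma_{a_r}$ and $\ell(w)=r$. The $q$-symmetriser of $H_k(q)$ is $P_k=\frac{q^{-k(k-1)/2}}{[k]_q!}\sum_{w\in\mathfrak S_k}q^{\ell(w)}\sigma_w$, with $[L]_q=\frac{q^L-q^{-L}}{q-q^{-1}}$, $[L]_q!=[1]_q\cdots[L]_q$. $P_{k,n}\in H_{kn}(q)$ is the product over $b=0,\dots,n-1$ of the copies of $P_k$ in the generators $\sigma_{bk+1},\dots,\sigma_{bk+k-1}$. The fused Hecke algebra $H^{fus}_{k,n}(q)=P_{k,n}H_{kn}(q)P_{k,n}$ is an algebra with unit $P_{k,n}$. *)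

theory Defs
  imports Complex_Main "HOL-Computational_Algebra.Polynomial" "HOL-Computational_Algebra.Fraction_Field"
    "HOL-Combinatorics.Permutations"
begin

type_synonym Cq = "complex poly fract"

definition qq :: Cq where "qq = Fract [:0, 1:] 1"

definition qint :: "nat \<Rightarrow> Cq" where
  "qint L = (qq ^ L - inverse qq ^ L) / (qq - inverse qq)"

definition qfact :: "nat \<Rightarrow> Cq" where
  "qfact L = (\<Prod>j = 1..L. qint j)"

definition stransp :: "nat \<Rightarrow> nat \<Rightarrow> nat" where
  "stransp a j = (if j = a then Suc a else if j = Suc a then a else j)"

definition word_perm :: "nat list \<Rightarrow> nat \<Rightarrow> nat" where
  "word_perm as = foldr (\<lambda>a f. stransp a \<circ> f) as id"

definition reduced_word :: "nat \<Rightarrow> (nat \<Rightarrow> nat) \<Rightarrow> nat list \<Rightarrow> bool" where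
  "reduced_word m w as \<longleftrightarrow> set as \<subseteq> {1..<m} \<and> word_perm as = w \<and>
     (\<forall>bs. set bs \<subseteq> {1..<m} \<and> word_perm bs = w \<longrightarrow> length as \<le> length bs)"

definition red_word :: "nat \<Rightarrow> (nat \<Rightarrow> nat) \<Rightarrow> nat list" where
  "red_word m w = (SOME as. reduced_word m w as)"

definition perm_length :: "nat \<Rightarrow> (nat \<Rightarrow> nat) \<Rightarrow> nat" where
  "perm_length m w = length (red_word m w)"

definition sigma_w :: "(nat \<Rightarrow> 'a::ring_1) \<Rightarrow> nat \<Rightarrow> nat \<Rightarrow> (nat \<Rightarrow> nat) \<Rightarrow> 'a" where
  "sigma_w \<sigma> off m w = prod_list (map (\<lambda>a. \<sigma> (off + a)) (red_word m w))"

text \<open>The copy of the q-symmetriser P_k in generators sigma_{bk+1},...,sigma_{bk+k-1};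
  emb is the structure map of the C(q)-algebra.\<close>
definition Psym :: "(Cq \<Rightarrow> 'a::ring_1) \<Rightarrow> (nat \<Rightarrow> 'a) \<Rightarrow> nat \<Rightarrow> nat \<Rightarrow> 'a" where
  "Psym emb \<sigma> k b = emb (qq powi (- int (k * (k - 1) div 2)) / qfact k) *
     (\<Sum>w\<in>{w. w permutes {1..k}}. emb (qq ^ perm_length k w) * sigma_w \<sigma> (b * k) k w)"

definition Pkn :: "(Cq \<Rightarrow> 'a::ring_1) \<Rightarrow> (nat \<Rightarrow> 'a) \<Rightarrow> nat \<Rightarrow> nat \<Rightarrow> 'a" where
  "Pkn emb \<sigma> k n = prod_list (map (Psym emb \<sigma> k) [0..<n])"

definition block_swap :: "nat \<Rightarrow> nat \<Rightarrow> nat \<Rightarrow> nat" where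
  "block_swap k i j = (if (i - 1) * k < j \<and> j \<le> i * k then j + k
     else if i * k < j \<and> j \<le> (i + 1) * k then j - k else j)"

text \<open>sigma : nat => 'a satisfies the defining relations of H_m(q) (indices 1..m-1),
  and emb makes 'a a C(q)-algebra (central unital ring homomorphism).\<close>
definition hecke_rep :: "(Cq \<Rightarrow> 'a::ring_1) \<Rightarrow> nat \<Rightarrow> (nat \<Rightarrow> 'a) \<Rightarrow> bool" where
  "hecke_rep emb m \<sigma> \<longleftrightarrow>
     emb 1 = 1 \<and> (\<forall>x y. emb (x + y) = emb x + emb y) \<and> (\<forall>x y. emb (x * y) = emb x * emb y) \<and>
     (\<forall>x a. emb x * a = a * emb x) \<and>
     (\<forall>i. 1 \<le> i \<and> i + 1 \<le> m - 1 \<longrightarrow> \<sigma> i * \<sigma> (i+1) * \<sigma> i = \<sigma> (i+1) * \<sigma> i * \<sigma> (i+1)) \<and>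
     (\<forall>i j. i \<in> {1..<m} \<and> j \<in> {1..<m} \<and> (i + 1 < j \<or> j + 1 < i) \<longrightarrow> \<sigma> i * \<sigma> j = \<sigma> j * \<sigma> i) \<and>
     (\<forall>i\<in>{1..<m}. \<sigma> i * \<sigma> i = 1 + emb (qq - inverse qq) * \<sigma> i)"

end

theory Submission
  imports Defs
begin

(*
  Conjugation by \<sigma>_{w_i} is computed on reduced words (Matsumoto's theorem for the braid relations,
  via inversion counts). For a generator s_a inside one of the two exchanged blocks
  or outside both, w_i s_a = s_{w_i(a)} w_i with \<ell>(w_i s_a) = \<ell>(w_i) + 1, so
  \<sigma>_{w_i} \<sigma>_a = \<sigma>_{w_i(a)} \<sigma>_{w_i}: conjugation by \<sigma>_{w_i} exchanges the i-th and (i+1)-th copies of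
  H_k and fixes the others. Hence it swaps the two corresponding symmetrisers, which commute, and
  commutes with all other factors of P_{k,n}. The block exchanges satisfy the braid and commutation
  relations of S_{kn} with additive lengths, so the \<sigma>_{w_i} satisfy them as well, and since
  P x P = x P^2 whenever x commutes with P, so do the \<Sigma>_i.
*)

definition inversions :: "nat \<Rightarrow> (nat \<Rightarrow> nat) \<Rightarrow> (nat \<times> nat) set" where
  "inversions m w = {(i, j). 1 \<le> i \<and> i < j \<and> j \<le> m \<and> w j < w i}"

definition num_inversions :: "nat \<Rightarrow> (nat \<Rightarrow> nat) \<Rightarrow> nat" where
  "num_inversions m w = card (inversions m w)"

lemma finite_inversions: "finite (inversions m w)"
  by (rule finite_subset[of _ "{1..m} \<times> {1..m}"]) (auto simp: inversions_def)

lemma num_inversions_id [simp]: "num_inversions m id = 0"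
proof -
  have "inversions m id = {}" by (auto simp: inversions_def)
  then show ?thesis by (simp add: num_inversions_def)
qed

lemma permutes_eq_id_if_num_inversions_eq_0:
  assumes w: "w permutes {1..m}" and "num_inversions m w = 0"
  shows "w = id"
proof -
  have mono: "w i < w j" if "1 \<le> i" "i < j" "j \<le> m" for i j
  proof -
    have "(i, j) \<notin> inversions m w"
      using assms finite_inversions by (auto simp: num_inversions_def)
    moreover have "w i \<noteq> w j" using that permutes_inj[OF w] by (auto dest: injD)
    ultimately show ?thesis using that by (auto simp: inversions_def)
  qed
  have "map w [1..<Suc m] = [1..<Suc m]"
  proof (rule sorted_distinct_set_unique)
    show "sorted (map w [1..<Suc m])"
      unfolding sorted_map
    proof (rule sorted_wrt_mono_rel[OF _ sorted_wrt_upt])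
      fix i j assume "i \<in> set [1..<Suc m]" "j \<in> set [1..<Suc m]" "i < j"
      then show "w i \<le> w j" using mono[of i j] by (simp del: upt_Suc)
    qed
    show "distinct (map w [1..<Suc m])"
      using permutes_inj_on[OF w] by (simp add: distinct_map atLeastLessThanSuc_atLeastAtMost)
    show "set (map w [1..<Suc m]) = set [1..<Suc m]"
      using permutes_image[OF w] by (simp only: set_map set_upt atLeastLessThanSuc_atLeastAtMost)
  qed (simp_all del: upt_Suc)
  then have "map w [1..<Suc m] = map id [1..<Suc m]" by simp
  then have "\<forall>j\<in>{1..m}. w j = j"
    by (simp only: map_eq_conv set_upt atLeastLessThanSuc_atLeastAtMost id_apply)
  then show ?thesis using w by (auto simp: fun_eq_iff permutes_not_in)
qed

lemma stransp_stransp [simp]: "stransp a (stransp a x) = x"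
  by (auto simp: stransp_def)

lemma stransp_comp_stransp [simp]: "stransp a \<circ> stransp a = id"
  by (auto simp: fun_eq_iff)

lemma inj_stransp: "inj (stransp a)"
  by (metis injI stransp_stransp)

lemma stransp_permutes:
  assumes "a \<in> {1..<m}"
  shows "stransp a permutes {1..m}"
proof -
  have "stransp a = transpose a (Suc a)"
    by (auto simp: stransp_def transpose_def fun_eq_iff)
  then show ?thesis using assms by (auto intro: permutes_swap_id)
qed

text \<open>Right multiplication by \<open>stransp a\<close> at an ascent of \<open>w\<close> creates the inversion
  \<open>(a, Suc a)\<close> and permutes all other inversions by \<open>stransp a\<close>.\<close>
lemma num_inversions_comp_stransp:
  assumes a: "a \<in> {1..<m}" and ascent: "w a < w (Suc a)"
  shows "num_inversions m (w \<circ> stransp a) = Suc (num_inversions m w)"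
proof -
  define swap where "swap = (\<lambda>(i, j). (stransp a i, stransp a j))"
  have order: "stransp a i < stransp a j" if "i < j" "(i, j) \<noteq> (a, Suc a)" for i j
    using that by (auto simp: stransp_def)
  have eq: "inversions m (w \<circ> stransp a) = insert (a, Suc a) (swap ` inversions m w)"
  proof (intro equalityI subsetI)
    fix p assume p: "p \<in> inversions m (w \<circ> stransp a)"
    obtain i j where ij: "p = (i, j)" by (cases p)
    show "p \<in> insert (a, Suc a) (swap ` inversions m w)"
    proof (cases "p = (a, Suc a)")
      case False
      have "(stransp a i, stransp a j) \<in> inversions m w"
        using p ij order[of i j] False a
        by (auto simp: inversions_def stransp_def split: if_splits)
      moreover have "swap (stransp a i, stransp a j) = p" by (simp add: swap_def ij)
      ultimately show ?thesis by (metis imageI insertI2)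
    qed simp
  next
    fix p assume p: "p \<in> insert (a, Suc a) (swap ` inversions m w)"
    show "p \<in> inversions m (w \<circ> stransp a)"
    proof (cases "p = (a, Suc a)")
      case True
      then show ?thesis using a ascent by (auto simp: inversions_def stransp_def)
    next
      case False
      then obtain i j where ij: "(i, j) \<in> inversions m w" "p = swap (i, j)" using p by auto
      have "(i, j) \<noteq> (a, Suc a)" using ij ascent by (auto simp: inversions_def)
      then show ?thesis using ij order[of i j] a
        by (auto simp: inversions_def swap_def stransp_def split: if_splits)
    qed
  qed
  have "inj_on swap (inversions m w)"
    by (auto simp: inj_on_def swap_def dest: injD[OF inj_stransp])
  moreover have "(a, Suc a) \<notin> swap ` inversions m w"
    by (auto simp: swap_def inversions_def stransp_def split: if_splits)
  ultimately show ?thesis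
    unfolding num_inversions_def eq using finite_inversions by (simp add: card_image)
qed

lemma num_inversions_comp_stransp_descent:
  assumes a: "a \<in> {1..<m}" and descent: "w (Suc a) < w a"
  shows "num_inversions m w = Suc (num_inversions m (w \<circ> stransp a))"
  using num_inversions_comp_stransp[OF a, of "w \<circ> stransp a"] descent
  by (simp add: comp_assoc stransp_def)

lemma word_perm_Nil [simp]: "word_perm [] = id"
  by (simp add: word_perm_def)

lemma word_perm_Cons [simp]: "word_perm (a # as) = stransp a \<circ> word_perm as"
  by (simp add: word_perm_def)

lemma word_perm_append: "word_perm (as @ bs) = word_perm as \<circ> word_perm bs"
  by (induction as) (auto simp: comp_assoc)

lemma inj_word_perm: "inj (word_perm as)"
proof (induction as)
  case (Cons a as)
  then show ?case unfolding word_perm_Cons by (rule inj_compose[OF inj_stransp])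
qed simp

lemma word_perm_permutes: "set as \<subseteq> {1..<m} \<Longrightarrow> word_perm as permutes {1..m}"
proof (induction as)
  case (Cons a as)
  then show ?case unfolding word_perm_Cons by (intro permutes_compose stransp_permutes) auto
qed (simp add: permutes_id)

lemma num_inversions_word_perm_le:
  "set as \<subseteq> {1..<m} \<Longrightarrow> num_inversions m (word_perm as) \<le> length as"
proof (induction as rule: rev_induct)
  case (snoc a as)
  let ?w = "word_perm as"
  have a: "a \<in> {1..<m}" and IH: "num_inversions m ?w \<le> length as" using snoc by auto
  have "?w a \<noteq> ?w (Suc a)" using inj_word_perm[of as] by (auto dest: injD)
  then consider "?w a < ?w (Suc a)" | "?w (Suc a) < ?w a" by linarith
  moreover have wa: "word_perm (as @ [a]) = ?w \<circ> stransp a" by (simp add: word_perm_append)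
  ultimately have "num_inversions m (word_perm (as @ [a])) \<le> Suc (num_inversions m ?w)"
  proof cases
    case 1
    show ?thesis unfolding wa num_inversions_comp_stransp[OF a 1] ..
  next
    case 2
    show ?thesis unfolding wa using num_inversions_comp_stransp_descent[OF a 2] by linarith
  qed
  then show ?case using IH by simp
qed simp

lemma descent_if_inversion:
  fixes w :: "nat \<Rightarrow> nat"
  assumes "i < j" "w j < w i"
  shows "\<exists>a. i \<le> a \<and> a < j \<and> w (Suc a) < w a"
proof (rule ccontr)
  assume "\<not> ?thesis"
  then have step: "w a \<le> w (Suc a)" if "i \<le> a" "a < j" for a
    using that by (meson not_less)
  have "w i \<le> w (i + d)" if "i + d \<le> j" for d
    using that
  proof (induction d)
    case (Suc d)
    then show ?case using step[of "i + d"] by simp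
  qed simp
  from this[of "j - i"] assms show False by simp
qed

lemma exists_word_num_inversions:
  "w permutes {1..m} \<Longrightarrow> \<exists>u. set u \<subseteq> {1..<m} \<and> word_perm u = w \<and> length u = num_inversions m w"
proof (induction "num_inversions m w" arbitrary: w)
  case 0
  then have "w = id" by (intro permutes_eq_id_if_num_inversions_eq_0) simp_all
  then show ?case using "0.hyps" by (intro exI[of _ "[]"]) simp
next
  case (Suc l)
  then have "inversions m w \<noteq> {}" by (auto simp: num_inversions_def)
  then obtain i j where ij: "1 \<le> i" "i < j" "j \<le> m" "w j < w i"
    by (auto simp: inversions_def)
  then obtain a where a: "i \<le> a" "a < j" "w (Suc a) < w a"
    using descent_if_inversion[OF ij(2,4)] by blast
  have a_range: "a \<in> {1..<m}" using a ij by auto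
  note descent = num_inversions_comp_stransp_descent[OF a_range a(3)]
  have "w \<circ> stransp a permutes {1..m}"
    using Suc.prems a_range by (intro permutes_compose stransp_permutes)
  moreover have "l = num_inversions m (w \<circ> stransp a)" using Suc.hyps(2) descent by simp
  ultimately obtain u where u: "set u \<subseteq> {1..<m}" "word_perm u = w \<circ> stransp a"
      "length u = num_inversions m (w \<circ> stransp a)"
    using Suc.hyps(1) by blast
  have "word_perm (u @ [a]) = w" by (simp add: word_perm_append u(2) comp_assoc)
  then show ?case using u(1,3) a_range descent by (intro exI[of _ "u @ [a]"]) simp
qed

lemma reduced_word_iff:
  "reduced_word m w u \<longleftrightarrow>
     set u \<subseteq> {1..<m} \<and> word_perm u = w \<and> length u = num_inversions m w"
proof
  assume red: "reduced_word m w u"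
  then have u: "set u \<subseteq> {1..<m}" "word_perm u = w" by (auto simp: reduced_word_def)
  obtain v where "set v \<subseteq> {1..<m}" "word_perm v = w" "length v = num_inversions m w"
    using exists_word_num_inversions[OF word_perm_permutes[OF u(1)]] u(2) by auto
  then have "length u \<le> num_inversions m w" using red by (auto simp: reduced_word_def)
  then show "set u \<subseteq> {1..<m} \<and> word_perm u = w \<and> length u = num_inversions m w"
    using u num_inversions_word_perm_le[OF u(1)] by auto
next
  assume "set u \<subseteq> {1..<m} \<and> word_perm u = w \<and> length u = num_inversions m w"
  then show "reduced_word m w u"
    unfolding reduced_word_def using num_inversions_word_perm_le by fastforce
qed

lemma reduced_word_red_word:
  assumes "w permutes {1..m}"
  shows "reduced_word m w (red_word m w)"
proof -
  obtain u where "reduced_word m w u"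
    using exists_word_num_inversions[OF assms] by (auto simp: reduced_word_iff)
  then show ?thesis unfolding red_word_def by (rule someI)
qed

lemma reduced_word_snocD:
  assumes "reduced_word m w (u @ [a])"
  shows "reduced_word m (w \<circ> stransp a) u" and "w (Suc a) < w a"
proof -
  have u: "set u \<subseteq> {1..<m}" and a: "a \<in> {1..<m}"
    and w: "w = word_perm u \<circ> stransp a" and len: "num_inversions m w = Suc (length u)"
    using assms by (auto simp: reduced_word_iff word_perm_append)
  have wu: "w \<circ> stransp a = word_perm u" by (simp add: w comp_assoc)
  have le: "num_inversions m (word_perm u) \<le> length u"
    by (rule num_inversions_word_perm_le[OF u])
  show "w (Suc a) < w a"
  proof (rule ccontr)
    assume "\<not> w (Suc a) < w a"
    moreover have "w a \<noteq> w (Suc a)"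
      by (auto simp: w stransp_def dest: injD[OF inj_word_perm])
    ultimately have "w a < w (Suc a)" by linarith
    then have "num_inversions m w \<le> num_inversions m (w \<circ> stransp a)"
      using num_inversions_comp_stransp[OF a] by simp
    then show False using len le wu by simp
  qed
  then have "num_inversions m (word_perm u) = length u"
    using num_inversions_comp_stransp_descent[OF a] len wu by simp
  then show "reduced_word m (w \<circ> stransp a) u" using u wu by (simp add: reduced_word_iff)
qed

lemma reduced_word_snocI:
  assumes "reduced_word m w u" "a \<in> {1..<m}" "w a < w (Suc a)"
  shows "reduced_word m (w \<circ> stransp a) (u @ [a])"
  using assms num_inversions_comp_stransp[OF assms(2,3)]
  by (auto simp: reduced_word_iff word_perm_append)

lemma exists_reduced_word_snoc:
  assumes w: "w permutes {1..m}" and a: "a \<in> {1..<m}" and descent: "w (Suc a) < w a"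
  shows "\<exists>u. reduced_word m w (u @ [a])"
proof -
  have "w \<circ> stransp a permutes {1..m}" using w a by (intro permutes_compose stransp_permutes)
  then have "reduced_word m (w \<circ> stransp a) (red_word m (w \<circ> stransp a))"
    by (rule reduced_word_red_word)
  moreover have "(w \<circ> stransp a) a < (w \<circ> stransp a) (Suc a)"
    using descent by (simp add: stransp_def)
  ultimately have "reduced_word m (w \<circ> stransp a \<circ> stransp a) (red_word m (w \<circ> stransp a) @ [a])"
    by (rule reduced_word_snocI[OF _ a])
  then show ?thesis by (auto simp: comp_assoc)
qed

lemma inversions_comp:
  assumes "inj v" and kept: "\<And>i j. (i, j) \<in> inversions m v \<Longrightarrow> w (v j) < w (v i)"
  shows "inversions m (w \<circ> v) =
    inversions m v \<union> {(i, j). 1 \<le> i \<and> i < j \<and> j \<le> m \<and> v i < v j \<and> w (v j) < w (v i)}"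
proof (intro equalityI subsetI)
  fix p assume p: "p \<in> inversions m (w \<circ> v)"
  then have "v (fst p) \<noteq> v (snd p)" using inj_eq[OF assms(1)] by (auto simp: inversions_def)
  then show "p \<in> inversions m v \<union> {(i, j). 1 \<le> i \<and> i < j \<and> j \<le> m \<and> v i < v j \<and> w (v j) < w (v i)}"
    using p by (auto simp: inversions_def)
qed (use kept in \<open>auto simp: inversions_def\<close>)

lemma bij_betw_map_prod_inversions:
  assumes v: "v permutes {1..m}" and kept: "\<And>i j. (i, j) \<in> inversions m v \<Longrightarrow> w (v j) < w (v i)"
  shows "bij_betw (map_prod v v)
    {(i, j). 1 \<le> i \<and> i < j \<and> j \<le> m \<and> v i < v j \<and> w (v j) < w (v i)} (inversions m w)"
    (is "bij_betw _ ?D _")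
proof (rule bij_betw_imageI)
  have range: "v j \<in> {1..m} \<longleftrightarrow> j \<in> {1..m}" for j
    using permutes_in_image[OF v] by blast
  have inj: "inj v" using v permutes_inj by blast
  show "inj_on (map_prod v v) ?D"
    using map_prod_inj_on[OF inj inj] by (rule inj_on_subset) simp
  show "map_prod v v ` ?D = inversions m w"
  proof (intro equalityI subsetI)
    fix y assume "y \<in> map_prod v v ` ?D"
    then obtain i j where ij: "(i, j) \<in> ?D" "y = (v i, v j)" by auto
    then have "v i \<in> {1..m}" "v j \<in> {1..m}" using range[of i] range[of j] by auto
    then show "y \<in> inversions m w" using ij by (auto simp: inversions_def)
  next
    fix y assume y: "y \<in> inversions m w"
    obtain i j where ij: "y = (v i, v j)"
    proof -
      have "surj v" by (rule permutes_surj[OF v])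
      then obtain i j where "fst y = v i" "snd y = v j"
        using surjD[of v "fst y"] surjD[of v "snd y"] by blast
      then show ?thesis using that[of i j] by (simp add: prod_eq_iff)
    qed
    have "v i \<in> {1..m}" "v j \<in> {1..m}" using y ij by (auto simp: inversions_def)
    then have ij_range: "i \<in> {1..m}" "j \<in> {1..m}" using range[of i] range[of j] by blast+
    have "\<not> j < i" using kept[of j i] y ij ij_range by (auto simp: inversions_def)
    moreover have "i \<noteq> j" using y ij by (auto simp: inversions_def)
    ultimately have "(i, j) \<in> ?D" using y ij ij_range by (auto simp: inversions_def)
    then show "y \<in> map_prod v v ` ?D" using ij by force
  qed
qed

text \<open>An inversion of \<open>w \<circ> v\<close> is either an inversion of \<open>v\<close> or the preimage under \<open>v\<close> of an
  inversion of \<open>w\<close>; the hypothesis says the first kind are never undone.\<close>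
lemma num_inversions_comp:
  assumes v: "v permutes {1..m}"
    and kept: "\<And>i j. (i, j) \<in> inversions m v \<Longrightarrow> w (v j) < w (v i)"
  shows "num_inversions m (w \<circ> v) = num_inversions m w + num_inversions m v"
proof -
  define D where "D = {(i, j). 1 \<le> i \<and> i < j \<and> j \<le> m \<and> v i < v j \<and> w (v j) < w (v i)}"
  have split: "inversions m (w \<circ> v) = inversions m v \<union> D"
    unfolding D_def by (rule inversions_comp[where w = w, OF permutes_inj[OF v] kept])
  have "card D = num_inversions m w"
    unfolding num_inversions_def D_def
    by (rule bij_betw_same_card[OF bij_betw_map_prod_inversions[where w = w, OF v kept]])
  moreover have "finite D" by (rule finite_subset[of _ "{1..m} \<times> {1..m}"]) (auto simp: D_def)
  moreover have "inversions m v \<inter> D = {}" by (auto simp: inversions_def D_def)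
  ultimately show ?thesis
    unfolding num_inversions_def split using finite_inversions by (simp add: card_Un_disjoint)
qed

lemma reduced_word_length: "reduced_word m w u \<Longrightarrow> length u = num_inversions m w"
  by (simp add: reduced_word_iff)

text \<open>\<open>braid_word a b\<close> and \<open>braid_word b a\<close> are the two sides of the braid relation
  (adjacent \<open>a\<close>, \<open>b\<close>) or of the commutation relation between \<open>\<sigma> a\<close> and \<open>\<sigma> b\<close>;
  \<open>braid_word a b\<close> ends with \<open>a\<close>.\<close>
definition braid_word :: "nat \<Rightarrow> nat \<Rightarrow> nat list" where
  "braid_word a b = (if a = Suc b \<or> b = Suc a then [a, b, a] else [b, a])"

lemma word_perm_braid_word: "word_perm (braid_word a b) = word_perm (braid_word b a)"
  by (auto simp: braid_word_def fun_eq_iff stransp_def)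

definition braid_relations :: "nat \<Rightarrow> (nat \<Rightarrow> 'a::monoid_mult) \<Rightarrow> bool" where
  "braid_relations m \<sigma> \<longleftrightarrow>
     (\<forall>a. 1 \<le> a \<longrightarrow> a + 2 \<le> m \<longrightarrow> \<sigma> a * \<sigma> (a + 1) * \<sigma> a = \<sigma> (a + 1) * \<sigma> a * \<sigma> (a + 1)) \<and>
     (\<forall>a b. a \<in> {1..<m} \<longrightarrow> b \<in> {1..<m} \<longrightarrow> a + 1 < b \<longrightarrow> \<sigma> a * \<sigma> b = \<sigma> b * \<sigma> a)"

lemma braid_relations_commute:
  "braid_relations m \<sigma> \<Longrightarrow> a \<in> {1..<m} \<Longrightarrow> c \<in> {1..<m} \<Longrightarrow> a + 1 < c \<Longrightarrow>
    \<sigma> a * \<sigma> c = \<sigma> c * \<sigma> a"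
  unfolding braid_relations_def by blast

lemma prod_list_braid_word:
  assumes rel: "braid_relations m \<sigma>" and ab: "a \<in> {1..<m}" "b \<in> {1..<m}"
  shows "prod_list (map \<sigma> (braid_word a b)) = prod_list (map \<sigma> (braid_word b a))"
proof -
  consider "b = Suc a" | "a = Suc b" | "a + 1 < b" | "b + 1 < a" | "a = b" by linarith
  then show ?thesis
    using rel ab unfolding braid_relations_def braid_word_def
    by cases (auto simp: mult.assoc)
qed

lemma exists_reduced_word_braid_word:
  assumes w: "w permutes {1..m}" and ab: "a \<in> {1..<m}" "b \<in> {1..<m}" "a \<noteq> b"
    and descents: "w (Suc a) < w a" "w (Suc b) < w b"
  shows "\<exists>x. reduced_word m w (x @ braid_word a b)"
proof -
  have ascent_a: "(w \<circ> stransp a) a < (w \<circ> stransp a) (Suc a)"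
    using descents by (simp add: stransp_def)
  have wa: "w \<circ> stransp a permutes {1..m}" using w ab by (intro permutes_compose stransp_permutes)
  show ?thesis
  proof (cases "a = Suc b \<or> b = Suc a")
    case adjacent: True
    define w' where "w' = w \<circ> stransp a \<circ> stransp b"
    have "w' permutes {1..m}" unfolding w'_def using w ab by (intro permutes_compose stransp_permutes)
    moreover have "w' (Suc a) < w' a" "w' b < w' (Suc b)"
      using adjacent descents by (auto simp: w'_def stransp_def)
    ultimately obtain x where "reduced_word m w' (x @ [a])"
      using exists_reduced_word_snoc ab by blast
    then have "reduced_word m (w' \<circ> stransp b) ((x @ [a]) @ [b])"
      using reduced_word_snocI ab \<open>w' b < w' (Suc b)\<close> by blast
    then have "reduced_word m (w \<circ> stransp a) (x @ [a, b])" by (simp add: w'_def comp_assoc)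
    from reduced_word_snocI[where w = "w \<circ> stransp a", OF this ab(1) ascent_a] show ?thesis
      using adjacent by (intro exI[of _ x]) (simp add: braid_word_def comp_assoc)
  next
    case False
    have "(w \<circ> stransp a) (Suc b) < (w \<circ> stransp a) b"
      using False ab descents by (auto simp: stransp_def)
    then obtain x where "reduced_word m (w \<circ> stransp a) (x @ [b])"
      using exists_reduced_word_snoc[OF wa ab(2)] by blast
    from reduced_word_snocI[where w = "w \<circ> stransp a", OF this ab(1) ascent_a] show ?thesis
      using False by (intro exI[of _ x]) (simp add: braid_word_def comp_assoc)
  qed
qed

lemma reduced_word_braid_word_swap:
  assumes "reduced_word m w (x @ braid_word a b)" "b \<in> {1..<m}"
  shows "reduced_word m w (x @ braid_word b a)"
  using assms word_perm_braid_word[of a b]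
  by (auto simp: reduced_word_iff word_perm_append braid_word_def split: if_splits)

theorem matsumoto:
  assumes rel: "braid_relations m \<sigma>"
  shows "reduced_word m w u \<Longrightarrow> reduced_word m w v \<Longrightarrow> prod_list (map \<sigma> u) = prod_list (map \<sigma> v)"
proof (induction "length u" arbitrary: w u v)
  case 0
  then show ?case using reduced_word_length[OF "0.prems"(1)] reduced_word_length[OF "0.prems"(2)]
    by simp
next
  case (Suc l)
  have same_last: "prod_list (map \<sigma> x) = prod_list (map \<sigma> y)"
    if x: "reduced_word m w x" "length x = Suc l" and y: "reduced_word m w y"
      and last: "last x = last y" for x y
  proof -
    have "length y = Suc l" using x reduced_word_length[OF x(1)] reduced_word_length[OF y] by simp
    then obtain x' y' c where xy: "x = x' @ [c]" "y = y' @ [c]"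
      using x(2) last by (metis append_butlast_last_id length_greater_0_conv zero_less_Suc)
    have "prod_list (map \<sigma> x') = prod_list (map \<sigma> y')"
      using Suc.hyps(1)[of x' "w \<circ> stransp c" y'] x y reduced_word_snocD(1) xy by simp
    then show ?thesis using xy by simp
  qed
  obtain u' a where u: "u = u' @ [a]"
    using Suc.hyps(2) by (metis append_butlast_last_id length_greater_0_conv zero_less_Suc)
  have "length v = Suc l"
    using Suc.hyps(2) reduced_word_length[OF Suc.prems(1)] reduced_word_length[OF Suc.prems(2)] by simp
  then obtain v' b where v: "v = v' @ [b]"
    by (metis append_butlast_last_id length_greater_0_conv zero_less_Suc)
  show ?case
  proof (cases "a = b")
    case True
    then show ?thesis using same_last[OF Suc.prems(1) Suc.hyps(2)[symmetric] Suc.prems(2)] u v by simp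
  next
    case False
    txt \<open>Both last letters are descents of \<open>w\<close>, so \<open>w\<close> also has reduced words ending in either
      side of the relation between \<open>\<sigma> a\<close> and \<open>\<sigma> b\<close>.\<close>
    have w: "w permutes {1..m}" and ab: "a \<in> {1..<m}" "b \<in> {1..<m}"
      using Suc.prems u v word_perm_permutes by (auto simp: reduced_word_iff)
    have "w (Suc a) < w a" "w (Suc b) < w b"
      using Suc.prems u v reduced_word_snocD(2) by blast+
    then obtain x where x: "reduced_word m w (x @ braid_word a b)"
      using exists_reduced_word_braid_word[OF w ab False] by blast
    have x': "reduced_word m w (x @ braid_word b a)"
      by (rule reduced_word_braid_word_swap[OF x ab(2)])
    have "prod_list (map \<sigma> u) = prod_list (map \<sigma> (x @ braid_word a b))"
      using same_last[OF Suc.prems(1) Suc.hyps(2)[symmetric] x] u by (simp add: braid_word_def)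
    also have "\<dots> = prod_list (map \<sigma> (x @ braid_word b a))"
      using prod_list_braid_word[OF rel ab] by simp
    also have "\<dots> = prod_list (map \<sigma> v)"
      using same_last[OF Suc.prems(2) \<open>length v = Suc l\<close> x'] v by (simp add: braid_word_def)
    finally show ?thesis .
  qed
qed

lemma sigma_w_eq_prod_list:
  assumes rel: "braid_relations m \<sigma>" and u: "reduced_word m w u"
  shows "sigma_w \<sigma> 0 m w = prod_list (map \<sigma> u)"
proof -
  have "w permutes {1..m}" using u word_perm_permutes by (auto simp: reduced_word_def)
  from matsumoto[OF rel reduced_word_red_word[OF this] u] show ?thesis
    by (simp add: sigma_w_def)
qed

lemma sigma_w_comp:
  assumes rel: "braid_relations m \<sigma>" and v: "v permutes {1..m}" and w: "w permutes {1..m}"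
    and additive: "num_inversions m (w \<circ> v) = num_inversions m w + num_inversions m v"
  shows "sigma_w \<sigma> 0 m (w \<circ> v) = sigma_w \<sigma> 0 m w * sigma_w \<sigma> 0 m v"
proof -
  have "reduced_word m (w \<circ> v) (red_word m w @ red_word m v)"
    using reduced_word_red_word[OF v] reduced_word_red_word[OF w] additive
    by (auto simp: reduced_word_iff word_perm_append)
  from sigma_w_eq_prod_list[OF rel this] show ?thesis by (simp add: sigma_w_def)
qed

lemma sigma_w_mult_generator:
  assumes rel: "braid_relations m \<sigma>" and w: "w permutes {1..m}"
    and ab: "a \<in> {1..<m}" "b \<in> {1..<m}"
    and conj: "w \<circ> stransp a = stransp b \<circ> w" and ascent: "w a < w (Suc a)"
  shows "sigma_w \<sigma> 0 m w * \<sigma> a = \<sigma> b * sigma_w \<sigma> 0 m w"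
proof -
  let ?u = "red_word m w"
  have u: "reduced_word m w ?u" by (rule reduced_word_red_word[OF w])
  have snoc: "reduced_word m (w \<circ> stransp a) (?u @ [a])"
    by (rule reduced_word_snocI[OF u ab(1) ascent])
  then have "reduced_word m (w \<circ> stransp a) (b # ?u)"
    using u ab(2) conj by (auto simp: reduced_word_iff)
  from matsumoto[OF rel snoc this] show ?thesis by (simp add: sigma_w_def)
qed

definition block_exch :: "nat \<Rightarrow> nat \<Rightarrow> nat \<Rightarrow> nat" where
  "block_exch A k j =
     (if A < j \<and> j \<le> A + k then j + k else if A + k < j \<and> j \<le> A + 2 * k then j - k else j)"

lemma block_swap_eq_block_exch: "1 \<le> i \<Longrightarrow> block_swap k i = block_exch ((i - 1) * k) k"
  by (cases i) (auto simp: fun_eq_iff block_swap_def block_exch_def algebra_simps)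

lemma block_exch_first_block: "A < p \<Longrightarrow> p \<le> A + k \<Longrightarrow> block_exch A k p = p + k"
  by (simp add: block_exch_def)

lemma block_exch_second_block: "A + k < p \<Longrightarrow> p \<le> A + 2 * k \<Longrightarrow> block_exch A k p = p - k"
  by (simp add: block_exch_def)

lemma block_exch_below: "p \<le> A \<Longrightarrow> block_exch A k p = p"
  by (simp add: block_exch_def)

lemma block_exch_above: "A + 2 * k < p \<Longrightarrow> block_exch A k p = p"
  by (simp add: block_exch_def)

lemma block_exch_block_exch [simp]: "block_exch A k (block_exch A k j) = j"
  by (auto simp: block_exch_def)

lemma block_exch_permutes: "A + 2 * k \<le> m \<Longrightarrow> block_exch A k permutes {1..m}"
  unfolding permutes_def
proof (intro conjI allI impI)
  show "block_exch A k x = x" if "A + 2 * k \<le> m" "x \<notin> {1..m}" for x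
    using that by (auto simp: block_exch_def)
  show "\<exists>!x. block_exch A k x = y" for y
    by (metis block_exch_block_exch)
qed

lemma inj_block_exch: "inj (block_exch A k)"
  by (metis injI block_exch_block_exch)

lemma block_exch_Suc:
  "c \<notin> {A, A + k, A + 2 * k} \<Longrightarrow> block_exch A k (Suc c) = Suc (block_exch A k c)"
  by (auto simp: block_exch_def)

lemma block_exch_comp_stransp:
  assumes "c \<notin> {A, A + k, A + 2 * k}"
  shows "block_exch A k \<circ> stransp c = stransp (block_exch A k c) \<circ> block_exch A k"
proof
  fix x
  have "block_exch A k x \<noteq> block_exch A k c" "block_exch A k x \<noteq> Suc (block_exch A k c)"
    if "x \<noteq> c" "x \<noteq> Suc c"
    using that block_exch_Suc[OF assms] injD[OF inj_block_exch] by metis+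
  then show "(block_exch A k \<circ> stransp c) x = (stransp (block_exch A k c) \<circ> block_exch A k) x"
    using block_exch_Suc[OF assms] by (auto simp: stransp_def)
qed

lemma inversions_block_exchD:
  "(i, j) \<in> inversions m (block_exch A k) \<Longrightarrow> A < i \<and> i \<le> A + k \<and> A + k < j \<and> j \<le> A + 2 * k"
  by (auto simp: inversions_def block_exch_def split: if_splits)

lemma num_inversions_comp_block_exch:
  assumes "A + 2 * k \<le> m"
    and increasing: "\<And>p q. A < p \<Longrightarrow> p \<le> A + k \<Longrightarrow> A + k < q \<Longrightarrow> q \<le> A + 2 * k \<Longrightarrow> w p < w q"
  shows "num_inversions m (w \<circ> block_exch A k) = num_inversions m w + num_inversions m (block_exch A k)"
proof (rule num_inversions_comp[OF block_exch_permutes[OF assms(1)]])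
  fix i j assume "(i, j) \<in> inversions m (block_exch A k)"
  then have "A < i" "i \<le> A + k" "A + k < j" "j \<le> A + 2 * k"
    by (blast dest: inversions_block_exchD)+
  then show "w (block_exch A k j) < w (block_exch A k i)"
    using increasing[of "j - k" "i + k"] by (simp add: block_exch_def)
qed

lemma hecke_rep_braid_relations: "hecke_rep emb m \<sigma> \<Longrightarrow> braid_relations m \<sigma>"
  unfolding hecke_rep_def braid_relations_def by auto

lemma intertwine_left:
  fixes z :: "'a::semigroup_mult"
  shows "z * a = b * z \<Longrightarrow> z * (a * r) = b * (z * r)"
  by (simp add: mult.assoc[symmetric])

lemma prod_list_map_intertwine:
  fixes z :: "'a::monoid_mult"
  shows "(\<And>a. a \<in> set xs \<Longrightarrow> z * f a = g a * z) \<Longrightarrow>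
    z * prod_list (map f xs) = prod_list (map g xs) * z"
proof (induction xs)
  case (Cons a xs)
  have head: "z * f a = g a * z" using Cons.prems by simp
  have "z * prod_list (map f xs) = prod_list (map g xs) * z" using Cons by simp
  then show ?case by (simp add: intertwine_left[OF head] mult.assoc)
qed simp

lemma scaled_sum_intertwine:
  fixes z c :: "'a::ring_1"
  assumes "z * c = c * z" and "\<And>u. u \<in> U \<Longrightarrow> z * d u = d u * z"
    and "\<And>u. u \<in> U \<Longrightarrow> z * X u = Y u * z"
  shows "z * (c * (\<Sum>u\<in>U. d u * X u)) = (c * (\<Sum>u\<in>U. d u * Y u)) * z"
proof -
  have "z * (\<Sum>u\<in>U. d u * X u) = (\<Sum>u\<in>U. d u * Y u) * z"
    unfolding sum_distrib_left sum_distrib_right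
  proof (rule sum.cong[OF refl])
    fix u assume "u \<in> U"
    then show "z * (d u * X u) = d u * Y u * z"
      by (simp add: intertwine_left[OF assms(2)] assms(3) mult.assoc)
  qed
  then show ?thesis by (simp add: intertwine_left[OF assms(1)] mult.assoc)
qed

lemma Psym_intertwine:
  fixes z :: "'a::ring_1"
  assumes central: "\<And>x. emb x * z = z * emb x"
    and generators: "\<And>a. a \<in> {1..<k} \<Longrightarrow> z * \<sigma> (b * k + a) = \<sigma> (b' * k + a) * z"
  shows "z * Psym emb \<sigma> k b = Psym emb \<sigma> k b' * z"
  unfolding Psym_def
proof (rule scaled_sum_intertwine)
  fix u assume "u \<in> {w. w permutes {1..k}}"
  then have "set (red_word k u) \<subseteq> {1..<k}"
    using reduced_word_red_word by (auto simp: reduced_word_iff)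
  then show "z * sigma_w \<sigma> (b * k) k u = sigma_w \<sigma> (b' * k) k u * z"
    unfolding sigma_w_def using generators by (intro prod_list_map_intertwine) auto
qed (use central in auto)

lemma commute_with_swapped_factors:
  fixes z :: "'a::monoid_mult"
  assumes "z * L = L * z" "z * R = R * z" "z * x = y * z" "z * y = x * z" "x * y = y * x"
  shows "z * (L * (x * (y * R))) = L * (x * (y * R)) * z"
  using assms(2)
  by (simp add: mult.assoc intertwine_left[OF assms(1)] intertwine_left[OF assms(3)]
      intertwine_left[OF assms(4)] intertwine_left[OF assms(5)[symmetric]])

lemma sigma_block_exch_mult_generator:
  assumes rel: "braid_relations m \<sigma>" and bound: "A + 2 * k \<le> m"
    and c: "c \<in> {1..<m}" "c \<notin> {A, A + k, A + 2 * k}"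
  shows "sigma_w \<sigma> 0 m (block_exch A k) * \<sigma> c = \<sigma> (block_exch A k c) * sigma_w \<sigma> 0 m (block_exch A k)"
proof (rule sigma_w_mult_generator[OF rel block_exch_permutes[OF bound] c(1)])
  show "block_exch A k c \<in> {1..<m}" using bound c by (auto simp: block_exch_def)
  show "block_exch A k \<circ> stransp c = stransp (block_exch A k c) \<circ> block_exch A k"
    using c(2) by (rule block_exch_comp_stransp)
  show "block_exch A k c < block_exch A k (Suc c)" using block_exch_Suc[OF c(2)] by simp
qed

lemma block_exch_braid:
  "block_exch A k \<circ> block_exch (A + k) k \<circ> block_exch A k =
    block_exch (A + k) k \<circ> block_exch A k \<circ> block_exch (A + k) k"
proof
  fix p
  consider "p \<le> A" | "A < p" "p \<le> A + k" | "A + k < p" "p \<le> A + 2 * k"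
    | "A + 2 * k < p" "p \<le> A + 3 * k" | "A + 3 * k < p"
    by linarith
  then show "(block_exch A k \<circ> block_exch (A + k) k \<circ> block_exch A k) p =
      (block_exch (A + k) k \<circ> block_exch A k \<circ> block_exch (A + k) k) p"
    by cases (simp_all add: block_exch_first_block block_exch_second_block block_exch_below block_exch_above)
qed

lemma sigma_block_exch_braid:
  assumes rel: "braid_relations m \<sigma>" and bound: "A + 3 * k \<le> m"
  defines "X \<equiv> \<lambda>B. sigma_w \<sigma> 0 m (block_exch B k)"
  shows "X A * X (A + k) * X A = X (A + k) * X A * X (A + k)"
proof -
  let ?a = "block_exch A k" and ?b = "block_exch (A + k) k"
  note block_values = block_exch_first_block block_exch_second_block block_exch_below block_exch_above
  have a: "?a permutes {1..m}" and b: "?b permutes {1..m}"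
    by (rule block_exch_permutes, use bound in linarith)+
  have ab: "num_inversions m (?a \<circ> ?b) = num_inversions m ?a + num_inversions m ?b"
    by (rule num_inversions_comp_block_exch) (use bound in \<open>simp_all add: block_values\<close>)
  have ba: "num_inversions m (?b \<circ> ?a) = num_inversions m ?b + num_inversions m ?a"
    by (rule num_inversions_comp_block_exch) (use bound in \<open>simp_all add: block_values\<close>)
  have aba: "num_inversions m (?a \<circ> ?b \<circ> ?a) = num_inversions m (?a \<circ> ?b) + num_inversions m ?a"
    by (rule num_inversions_comp_block_exch) (use bound in \<open>simp_all add: block_values\<close>)
  have bab: "num_inversions m (?b \<circ> ?a \<circ> ?b) = num_inversions m (?b \<circ> ?a) + num_inversions m ?b"
    by (rule num_inversions_comp_block_exch) (use bound in \<open>simp_all add: block_values\<close>)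
  show ?thesis
    unfolding X_def
    using sigma_w_comp[OF rel a permutes_compose[OF b a] aba] sigma_w_comp[OF rel b a ab]
      sigma_w_comp[OF rel b permutes_compose[OF a b] bab] sigma_w_comp[OF rel a b ba]
      block_exch_braid[of A k]
    by simp
qed

lemma sigma_block_exch_commute:
  assumes rel: "braid_relations m \<sigma>" and disjoint: "A + 2 * k \<le> C" and bound: "C + 2 * k \<le> m"
  shows "sigma_w \<sigma> 0 m (block_exch A k) * sigma_w \<sigma> 0 m (block_exch C k)
    = sigma_w \<sigma> 0 m (block_exch C k) * sigma_w \<sigma> 0 m (block_exch A k)"
proof -
  let ?a = "block_exch A k" and ?c = "block_exch C k"
  note block_values = block_exch_first_block block_exch_second_block block_exch_below block_exch_above
  have a: "?a permutes {1..m}" and c: "?c permutes {1..m}"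
    by (rule block_exch_permutes, use disjoint bound in linarith)+
  have ac: "num_inversions m (?a \<circ> ?c) = num_inversions m ?a + num_inversions m ?c"
    by (rule num_inversions_comp_block_exch) (use disjoint bound in \<open>simp_all add: block_values\<close>)
  have comm: "?a \<circ> ?c = ?c \<circ> ?a"
  proof
    fix p
    consider "p \<le> A" | "A < p" "p \<le> A + k" | "A + k < p" "p \<le> A + 2 * k"
      | "A + 2 * k < p" "p \<le> C" | "C < p" "p \<le> C + k" | "C + k < p" "p \<le> C + 2 * k"
      | "C + 2 * k < p"
      by linarith
    then show "(?a \<circ> ?c) p = (?c \<circ> ?a) p" using disjoint by cases (simp_all add: block_values)
  qed
  show ?thesis
    using sigma_w_comp[OF rel c a ac] sigma_w_comp[OF rel a c] ac comm by simp
qed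

lemma block_index_less: "(b::nat) < n \<Longrightarrow> a < k \<Longrightarrow> b * k + a < k * n"
  using mult_le_mono1[of "Suc b" n k] by (simp add: mult.commute)

lemma Psym_commute:
  assumes hecke: "hecke_rep emb (k * n) \<sigma>" and b: "b < b'" "b' < n"
  shows "Psym emb \<sigma> k b * Psym emb \<sigma> k b' = Psym emb \<sigma> k b' * Psym emb \<sigma> k b"
proof -
  have central: "\<And>x y. emb x * y = y * emb x" using hecke by (simp add: hecke_rep_def)
  have far: "\<sigma> (b' * k + a') * \<sigma> (b * k + a) = \<sigma> (b * k + a) * \<sigma> (b' * k + a')"
    if "a \<in> {1..<k}" "a' \<in> {1..<k}" for a a'
  proof -
    have "Suc b * k \<le> b' * k" using b by (intro mult_le_mono1) simp
    then have "b * k + a + 1 < b' * k + a'" using that by simp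
    moreover have "b * k + a \<in> {1..<k * n}" "b' * k + a' \<in> {1..<k * n}"
      using that b block_index_less[of b n a k] block_index_less[of b' n a' k] by auto
    ultimately show ?thesis
      by (intro braid_relations_commute[OF hecke_rep_braid_relations[OF hecke], symmetric])
  qed
  have "Psym emb \<sigma> k b * \<sigma> (b' * k + a') = \<sigma> (b' * k + a') * Psym emb \<sigma> k b"
    if "a' \<in> {1..<k}" for a'
    using that by (intro Psym_intertwine[symmetric] central far)
  then show ?thesis by (intro Psym_intertwine central)
qed

lemma sigma_block_exch_Psym:
  assumes hecke: "hecke_rep emb (k * n) \<sigma>" and j: "Suc j < n" and b: "b < n"
  defines "z \<equiv> sigma_w \<sigma> 0 (k * n) (block_exch (j * k) k)"
  shows "z * Psym emb \<sigma> k b = Psym emb \<sigma> k (transpose j (Suc j) b) * z"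
proof (rule Psym_intertwine)
  show "emb x * z = z * emb x" for x using hecke by (simp add: hecke_rep_def)
  fix a assume a: "a \<in> {1..<k}"
  have "Suc (Suc j) * k \<le> n * k" using j by (intro mult_le_mono1) simp
  then have bound: "j * k + 2 * k \<le> k * n" by (simp add: algebra_simps)
  consider "b < j" | "b = j" | "b = Suc j" | "Suc (Suc j) \<le> b" by linarith
  then have "block_exch (j * k) k (b * k + a) = transpose j (Suc j) b * k + a
      \<and> b * k + a \<notin> {j * k, j * k + k, j * k + 2 * k}"
  proof cases
    case 1
    then have "Suc b * k \<le> j * k" by (intro mult_le_mono1) simp
    then show ?thesis using 1 a by (simp add: transpose_def block_exch_below)
  next
    case 2
    then show ?thesis using a by (simp add: transpose_def block_exch_first_block)
  next
    case 3
    then show ?thesis using a by (simp add: transpose_def block_exch_second_block)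
  next
    case 4
    then have "Suc (Suc j) * k \<le> b * k" by (intro mult_le_mono1)
    then show ?thesis using 4 a by (simp add: transpose_def block_exch_above)
  qed
  then show "z * \<sigma> (b * k + a) = \<sigma> (transpose j (Suc j) b * k + a) * z"
    unfolding z_def using a block_index_less[OF b, of a k]
      sigma_block_exch_mult_generator[OF hecke_rep_braid_relations[OF hecke] bound, of "b * k + a"]
    by auto
qed

lemma sigma_block_swap_commute_Pkn:
  assumes hecke: "hecke_rep emb (k * n) \<sigma>" and i: "1 \<le> i" "i < n"
  defines "z \<equiv> sigma_w \<sigma> 0 (k * n) (block_swap k i)"
  shows "z * Pkn emb \<sigma> k n = Pkn emb \<sigma> k n * z"
proof -
  obtain j where j: "i = Suc j" using i by (cases i) auto
  have z: "z = sigma_w \<sigma> 0 (k * n) (block_exch (j * k) k)"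
    unfolding z_def using block_swap_eq_block_exch[OF i(1)] j by simp
  note conj = sigma_block_exch_Psym[OF hecke i(2)[unfolded j], folded z]
  have first: "z * Psym emb \<sigma> k j = Psym emb \<sigma> k (Suc j) * z" using conj[of j] i j by simp
  have second: "z * Psym emb \<sigma> k (Suc j) = Psym emb \<sigma> k j * z" using conj[of "Suc j"] i j by simp
  have fixed: "z * Psym emb \<sigma> k b = Psym emb \<sigma> k b * z" if "b < n" "b \<noteq> j" "b \<noteq> Suc j" for b
    using conj[OF that(1)] that by (simp add: transpose_def)
  have split: "[0..<n] = [0..<j] @ j # Suc j # [Suc (Suc j)..<n]"
  proof -
    have "[0..<n] = [0..<j] @ [j..<n]" using upt_add_eq_append[of 0 j "n - j"] i j by simp
    also have "[j..<n] = j # Suc j # [Suc (Suc j)..<n]" using i j by (simp add: upt_conv_Cons)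
    finally show ?thesis .
  qed
  show ?thesis
    unfolding Pkn_def split map_append prod_list.append list.map prod_list.Cons
    using i j
    by (intro commute_with_swapped_factors first second prod_list_map_intertwine fixed
        Psym_commute[OF hecke]) auto
qed

lemma sigma_block_swap_braid:
  assumes hecke: "hecke_rep emb (k * n) \<sigma>" and i: "1 \<le> i" "i + 2 \<le> n"
  defines "S \<equiv> \<lambda>i. sigma_w \<sigma> 0 (k * n) (block_swap k i)"
  shows "S i * S (i + 1) * S i = S (i + 1) * S i * S (i + 1)"
proof -
  obtain j where j: "i = Suc j" using i by (cases i) auto
  have "(j + 3) * k \<le> n * k" using i j by (intro mult_le_mono1) simp
  then have "j * k + 3 * k \<le> k * n" by (simp add: algebra_simps)
  moreover have "block_swap k i = block_exch (j * k) k" "block_swap k (i + 1) = block_exch (j * k + k) k"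
    using block_swap_eq_block_exch[of i k] block_swap_eq_block_exch[of "i + 1" k] j
    by (simp_all add: add.commute)
  ultimately show ?thesis
    unfolding S_def using sigma_block_exch_braid[OF hecke_rep_braid_relations[OF hecke]] by simp
qed

lemma sigma_block_swap_commute:
  assumes hecke: "hecke_rep emb (k * n) \<sigma>" and ij: "i \<in> {1..<n}" "j \<in> {1..<n}"
    and far: "i + 1 < j \<or> j + 1 < i"
  defines "S \<equiv> \<lambda>i. sigma_w \<sigma> 0 (k * n) (block_swap k i)"
  shows "S i * S j = S j * S i"
proof -
  have ordered: "S i * S j = S j * S i" if hyp: "1 \<le> i" "i + 1 < j" "j < n" for i j
  proof -
    obtain i' where i': "i = Suc i'" using hyp by (cases i) auto
    obtain j' where j': "j = Suc j'" using hyp by (cases j) auto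
    have "Suc (Suc i') * k \<le> j' * k" using hyp i' j' by (intro mult_le_mono1) simp
    moreover have "Suc (Suc j') * k \<le> n * k" using hyp j' by (intro mult_le_mono1) simp
    ultimately have "i' * k + 2 * k \<le> j' * k" "j' * k + 2 * k \<le> k * n"
      by (simp_all add: algebra_simps)
    from sigma_block_exch_commute[OF hecke_rep_braid_relations[OF hecke] this] show ?thesis
      unfolding S_def using block_swap_eq_block_exch[of i k] block_swap_eq_block_exch[of j k] i' j'
      by simp
  qed
  from far show ?thesis
  proof
    assume "i + 1 < j"
    then show ?thesis using ij by (intro ordered) auto
  next
    assume "j + 1 < i"
    then have "S j * S i = S i * S j" using ij by (intro ordered) auto
    then show ?thesis by simp
  qed
qed

lemma sandwich_braid:
  fixes P x y :: "'a::monoid_mult"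
  assumes x: "x * P = P * x" and y: "y * P = P * y" and braid: "x * y * x = y * x * y"
  shows "(P * x * P) * (P * y * P) * (P * x * P) = (P * y * P) * (P * x * P) * (P * y * P)"
proof -
  have "x * (y * (x * r)) = y * (x * (y * r))" for r by (simp add: mult.assoc[symmetric] braid)
  then show ?thesis
    by (simp add: mult.assoc intertwine_left[OF x[symmetric]] intertwine_left[OF y[symmetric]])
qed

lemma sandwich_commute:
  fixes P x y :: "'a::monoid_mult"
  assumes x: "x * P = P * x" and y: "y * P = P * y" and comm: "x * y = y * x"
  shows "(P * x * P) * (P * y * P) = (P * y * P) * (P * x * P)"
  by (simp add: mult.assoc intertwine_left[OF x[symmetric]] intertwine_left[OF y[symmetric]]
      intertwine_left[OF comm])

theorem mainTheorem8:
  fixes emb :: "Cq \<Rightarrow> 'a::ring_1" and \<sigma> :: "nat \<Rightarrow> 'a" and k n :: nat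
  assumes "k \<ge> 1" and "n \<ge> 2" and "hecke_rep emb (k * n) \<sigma>"
  defines "P \<equiv> Pkn emb \<sigma> k n"
  defines "Sw \<equiv> \<lambda>i. sigma_w \<sigma> 0 (k * n) (block_swap k i)"
  defines "\<Sigma> \<equiv> \<lambda>i. P * Sw i * P"
  shows "(\<forall>i\<in>{1..n-1}. Sw i * P = P * Sw i)
    \<and> (\<forall>i\<in>{1..n-2}. \<Sigma> i * \<Sigma> (i+1) * \<Sigma> i = \<Sigma> (i+1) * \<Sigma> i * \<Sigma> (i+1))
    \<and> (\<forall>i\<in>{1..n-1}. \<forall>j\<in>{1..n-1}. (i + 1 < j \<or> j + 1 < i) \<longrightarrow> \<Sigma> i * \<Sigma> j = \<Sigma> j * \<Sigma> i)"
proof (intro conjI ballI impI)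
  show commute_P: "Sw i * P = P * Sw i" if "i \<in> {1..n-1}" for i
    unfolding Sw_def P_def using that assms(2) by (intro sigma_block_swap_commute_Pkn[OF assms(3)]) auto
  show "\<Sigma> i * \<Sigma> (i+1) * \<Sigma> i = \<Sigma> (i+1) * \<Sigma> i * \<Sigma> (i+1)" if "i \<in> {1..n-2}" for i
  proof -
    have "Sw i * Sw (i+1) * Sw i = Sw (i+1) * Sw i * Sw (i+1)"
      unfolding Sw_def using that by (intro sigma_block_swap_braid[OF assms(3)]) auto
    then show ?thesis unfolding \<Sigma>_def using that by (intro sandwich_braid commute_P) auto
  qed
  show "\<Sigma> i * \<Sigma> j = \<Sigma> j * \<Sigma> i"
    if "i \<in> {1..n-1}" "j \<in> {1..n-1}" "i + 1 < j \<or> j + 1 < i" for i j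
  proof -
    have "Sw i * Sw j = Sw j * Sw i"
      unfolding Sw_def by (rule sigma_block_swap_commute[OF assms(3)]) (use that in auto)
    then show ?thesis unfolding \<Sigma>_def using that by (intro sandwich_commute commute_P) auto
  qed
qed

end
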